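(* Let $b_1,\dots,b_k$ be nonnegative integers, $n_1,\dots,n_k$ integers, and $n$ a positive integer, and suppose $\sum_{i=1}^kn_ib_i^m=0$ for $m=1,3,5,\dots,2n-1$. Then for all sufficiently large primes $p$, $$\prod_{i=1}^k(b_ip)!^{n_i}\equiv\prod_{i=1}^kb_i!^{n_i}\pmod{p^{2n+1}}.$$
   Context: The congruence is between $p$-adic integers (units for large $p$), i.e. the difference lies in $p^{2n+1}\mathbb Z_p$. *)

theory Defs
  imports Complex_Main "HOL-Computational_Algebra.Primes"
begin

text \<open>Congruence modulo p^N in the p-adic integers, restricted to rationals:
  x - y lies in p^N Z_(p), i.e. x - y = p^N a / d with integers a, d and p not dividing d.\<close>
definition padic_cong :: "nat \<Rightarrow> nat \<Rightarrow> rat \<Rightarrow> rat \<Rightarrow> bool" where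
  "padic_cong p N x y \<longleftrightarrow>
     (\<exists>a d :: int. \<not> (int p dvd d) \<and> x - y = of_int (int p ^ N * a) / of_int d)"

end

theory Submission
  imports Defs "HOL-Number_Theory.Number_Theory" "HOL-Computational_Algebra.Polynomial_FPS"
begin

text \<open>
  Pairing the factors \<open>jp + r\<close> and \<open>jp + (p - r)\<close> of \<open>(bp)!\<close> gives
  \<open>(bp)! = b! (pW)^b \<Prod>(j < b, r) (1 + j(j + 1) p^2 / (r(p - r)))\<close>, where \<open>r\<close> runs over
  \<open>1..(p - 1)/2\<close> and \<open>W = \<Prod>(r) r(p - r)\<close>. The hypothesis for \<open>m = 1\<close> cancels the powers of
  \<open>pW\<close>, so the quotient of the two sides is \<open>Q = \<Prod>(t) (1 + a(t) p^2)^e(t)\<close> with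
  \<open>a(i, j, r) = j(j + 1) / (r(p - r))\<close> and \<open>e(i, j, r) = n(i)\<close>. By the logarithmic derivative,
  \<open>Q - 1\<close> as a series in \<open>x = p^2\<close> vanishes below \<open>x^n\<close> as soon as the power sums
  \<open>\<Sum>(t) e(t) a(t)^m\<close> vanish for \<open>0 < m < n\<close>. These factor as
  \<open>(\<Sum>(r) (r(p - r))^-m) (\<Sum>(i) n(i) \<Sum>(j < b(i)) (j(j + 1))^m)\<close>, and the inner sum is an odd
  polynomial of degree \<open>2m + 1\<close> in \<open>b(i)\<close>, which the hypothesis kills. For \<open>m = n\<close> the first
  factor is \<open>\<equiv> \<plusminus>\<Sum>(r) r^(p-1-2n) \<equiv> 0 (mod p)\<close>, which supplies the last factor \<open>p\<close>.
\<close>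

unbundle fps_syntax

context comm_monoid_set
begin

lemma reflect_half_interval:
  fixes p :: nat
  assumes "odd p"
  shows "F g {1..p - 1} = F (\<lambda>r. g r \<^bold>* g (p - r)) {1..(p - 1) div 2}"
proof -
  define h where "h = (p - 1) div 2"
  have p: "p = 2 * h + 1" using assms unfolding h_def by presburger
  have image: "(\<lambda>r. p - r) ` {1..h} = {h + 1..p - 1}"
  proof (intro equalityI subsetI)
    fix x assume "x \<in> {h + 1..p - 1}"
    then have "x = p - (p - x)" "p - x \<in> {1..h}" using p by auto
    then show "x \<in> (\<lambda>r. p - r) ` {1..h}" by blast
  qed (use p in auto)
  have "inj_on (\<lambda>r. p - r) {1..h}" using p by (auto simp: inj_on_def)
  then have "F g {h + 1..p - 1} = F (\<lambda>r. g (p - r)) {1..h}"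
    unfolding image [symmetric] by (simp only: reindex comp_def)
  moreover have "F g {1..p - 1} = F g {1..h} \<^bold>* F g {h + 1..p - 1}"
    using p by (subst union_disjoint [symmetric]) (auto intro: arg_cong[where f = "F g"])
  ultimately show ?thesis unfolding h_def by (simp add: distrib)
qed

lemma Sigma_lessThan_times:
  fixes b :: "'c \<Rightarrow> nat"
  assumes "finite I" "finite A"
  shows "F g (SIGMA i:I. {..<b i} \<times> A) = F (\<lambda>i. F (\<lambda>j. F (\<lambda>r. g (i, j, r)) A) {..<b i}) I"
proof -
  have "F (\<lambda>j. F (\<lambda>r. g (i, j, r)) A) {..<b i} = F (\<lambda>jr. g (i, jr)) ({..<b i} \<times> A)" for i
    by (simp add: cartesian_product split_def)
  moreover have "F (\<lambda>i. F (\<lambda>jr. g (i, jr)) ({..<b i} \<times> A)) I = F g (SIGMA i:I. {..<b i} \<times> A)"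
    using assms by (subst Sigma) auto
  ultimately show ?thesis by simp
qed

end

lemma power_int_prod: "(\<Prod>i\<in>A. f i) powi c = (\<Prod>i\<in>A. (f i :: 'a :: field) powi c)"
  by (induction A rule: infinite_finite_induct) (auto simp: power_int_mult_distrib)

lemma prod_power_int_sum: "(x :: 'a :: field) \<noteq> 0 \<Longrightarrow> (\<Prod>i\<in>A. x powi f i) = x powi (\<Sum>i\<in>A. f i)"
  by (induction A rule: infinite_finite_induct) (auto simp: power_int_add)

lemma power_int_eq_nat_parts: "(y :: 'a :: field) \<noteq> 0 \<Longrightarrow> y powi e = y ^ nat e * inverse (y ^ nat (- e))"
  by (cases "e \<ge> 0") (auto simp: power_int_def power_inverse)

section \<open>\<open>p\<close>-integral rationals\<close>

definition p_integral :: "nat \<Rightarrow> rat \<Rightarrow> bool" where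
  "p_integral p x \<longleftrightarrow> (\<exists>a d :: int. \<not> int p dvd d \<and> x = of_int a / of_int d)"

definition p_unit :: "nat \<Rightarrow> rat \<Rightarrow> bool" where
  "p_unit p x \<longleftrightarrow> (\<exists>a d :: int. \<not> int p dvd a \<and> \<not> int p dvd d \<and> x = of_int a / of_int d)"

lemma p_integral_fraction: "\<not> int p dvd d \<Longrightarrow> p_integral p (of_int a / of_int d)"
  unfolding p_integral_def by blast

lemma p_integral_of_int: "prime p \<Longrightarrow> p_integral p (of_int a)"
  using p_integral_fraction[of p 1 a] not_prime_1 by (cases "p = 1") auto

lemma p_integral_of_nat: "prime p \<Longrightarrow> p_integral p (of_nat a)"
  using p_integral_of_int[of p "int a"] by simp

lemma p_integral_0: "prime p \<Longrightarrow> p_integral p 0"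
  and p_integral_1: "prime p \<Longrightarrow> p_integral p 1"
  using p_integral_of_int[of p 0] p_integral_of_int[of p 1] by simp_all

lemma p_integral_add:
  assumes "prime p" "p_integral p x" "p_integral p y"
  shows "p_integral p (x + y)"
proof -
  obtain a d b e where de: "\<not> int p dvd d" "\<not> int p dvd e"
    and "x = of_int a / of_int d" "y = of_int b / of_int e"
    using assms unfolding p_integral_def by blast
  moreover from de have "d \<noteq> 0" "e \<noteq> 0" by auto
  ultimately have "x + y = of_int (a * e + b * d) / of_int (d * e)"
    by (simp add: field_simps)
  moreover have "\<not> int p dvd d * e" using assms(1) de by (simp add: prime_dvd_mult_iff)
  ultimately show ?thesis using p_integral_fraction by metis
qed

lemma p_integral_mult:
  assumes "prime p" "p_integral p x" "p_integral p y"
  shows "p_integral p (x * y)"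
proof -
  obtain a d b e where "\<not> int p dvd d" "\<not> int p dvd e"
    and "x = of_int a / of_int d" "y = of_int b / of_int e"
    using assms unfolding p_integral_def by blast
  moreover from calculation have "\<not> int p dvd d * e"
    using assms(1) by (auto simp: prime_dvd_mult_iff)
  ultimately show ?thesis
    using p_integral_fraction[of p "d * e" "a * b"] by simp
qed

lemma p_integral_diff:
  assumes "prime p" "p_integral p x" "p_integral p y"
  shows "p_integral p (x - y)"
proof -
  have "p_integral p (- 1)" using p_integral_of_int[OF assms(1), of "- 1"] by simp
  from p_integral_add[OF assms(1,2) p_integral_mult[OF assms(1) this assms(3)]]
  show ?thesis by simp
qed

lemma p_integral_sum:
  "prime p \<Longrightarrow> (\<And>i. i \<in> A \<Longrightarrow> p_integral p (f i)) \<Longrightarrow> p_integral p (\<Sum>i\<in>A. f i)"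
  by (induction A rule: infinite_finite_induct) (auto intro: p_integral_add p_integral_0)

lemma p_integral_power: "prime p \<Longrightarrow> p_integral p x \<Longrightarrow> p_integral p (x ^ m)"
  by (induction m) (auto intro: p_integral_mult p_integral_1)

lemma p_unit_imp_p_integral: "p_unit p x \<Longrightarrow> p_integral p x"
  unfolding p_unit_def p_integral_def by blast

lemma p_unit_nonzero: "p_unit p x \<Longrightarrow> x \<noteq> 0"
  unfolding p_unit_def by auto

lemma p_unit_inverse: "p_unit p x \<Longrightarrow> p_unit p (inverse x)"
  unfolding p_unit_def by (metis inverse_divide)

lemma p_unit_of_nat: "prime p \<Longrightarrow> \<not> p dvd a \<Longrightarrow> p_unit p (of_nat a)"
  unfolding p_unit_def by (rule exI[of _ "int a"], rule exI[of _ 1]) (auto simp: prime_gt_1_nat)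

lemma p_unit_mult:
  assumes "prime p" "p_unit p x" "p_unit p y"
  shows "p_unit p (x * y)"
proof -
  obtain a d b e where "\<not> int p dvd a" "\<not> int p dvd d" "\<not> int p dvd b" "\<not> int p dvd e"
    and "x = of_int a / of_int d" "y = of_int b / of_int e"
    using assms unfolding p_unit_def by blast
  then show ?thesis
    unfolding p_unit_def using assms(1)
    by (intro exI[of _ "a * b"] exI[of _ "d * e"]) (simp add: prime_dvd_mult_iff)
qed

lemma p_unit_prod:
  "prime p \<Longrightarrow> (\<And>i. i \<in> A \<Longrightarrow> p_unit p (f i)) \<Longrightarrow> p_unit p (\<Prod>i\<in>A. f i)"
  by (induction A rule: infinite_finite_induct)
     (auto intro: p_unit_mult p_unit_of_nat[of p 1, simplified] simp: prime_gt_1_nat)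

lemma p_unit_power: "prime p \<Longrightarrow> p_unit p x \<Longrightarrow> p_unit p (x ^ m)"
  using p_unit_prod[of p "{..<m}" "\<lambda>_. x"] by simp

lemma p_unit_power_int: "prime p \<Longrightarrow> p_unit p x \<Longrightarrow> p_unit p (x powi m)"
  unfolding power_int_def by (auto intro: p_unit_power p_unit_inverse)

lemma p_unit_one_plus:
  assumes "padic_cong p 1 x 0"
  shows "p_unit p (1 + x)"
proof -
  obtain a d where ad: "\<not> int p dvd d" "x = of_int (int p * a) / of_int d"
    using assms unfolding padic_cong_def by auto
  moreover from ad(1) have "d \<noteq> 0" by auto
  ultimately have "1 + x = of_int (d + int p * a) / of_int d" by (simp add: field_simps)
  moreover have "\<not> int p dvd d + int p * a" using ad(1) by (simp add: dvd_add_left_iff)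
  ultimately show ?thesis unfolding p_unit_def using ad(1) by blast
qed

lemma padic_cong_0_iff:
  assumes "p > 0"
  shows "padic_cong p N x 0 \<longleftrightarrow> p_integral p (x / of_nat p ^ N)"
proof -
  have "x = of_int (int p ^ N * a) / of_int d \<longleftrightarrow> x / of_nat p ^ N = of_int a / of_int d"
    if "d \<noteq> 0" for a d :: int
    using assms that by (auto simp: field_simps)
  then show ?thesis unfolding padic_cong_def p_integral_def by (metis diff_zero dvd_0_right)
qed

lemma padic_cong_iff_diff: "padic_cong p N x y \<longleftrightarrow> padic_cong p N (x - y) 0"
  unfolding padic_cong_def by simp

lemma padic_cong_0_add:
  assumes "prime p" "padic_cong p N x 0" "padic_cong p N y 0"
  shows "padic_cong p N (x + y) 0"
  using assms p_integral_add[of p "x / of_nat p ^ N" "y / of_nat p ^ N"]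
  by (simp add: padic_cong_0_iff prime_gt_0_nat add_divide_distrib)

lemma padic_cong_refl: "prime p \<Longrightarrow> padic_cong p N x x"
  unfolding padic_cong_def using not_prime_1 by (intro exI[of _ 0] exI[of _ 1]) auto

lemma padic_cong_0_sum:
  "prime p \<Longrightarrow> (\<And>i. i \<in> A \<Longrightarrow> padic_cong p N (f i) 0) \<Longrightarrow> padic_cong p N (\<Sum>i\<in>A. f i) 0"
  by (induction A rule: infinite_finite_induct) (auto intro: padic_cong_0_add padic_cong_refl)

lemma padic_cong_0_mult:
  assumes "prime p" "padic_cong p M x 0" "padic_cong p K y 0"
  shows "padic_cong p (M + K) (x * y) 0"
  using assms p_integral_mult[of p "x / of_nat p ^ M" "y / of_nat p ^ K"]
  by (simp add: padic_cong_0_iff prime_gt_0_nat power_add)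

lemma padic_cong_0_mult_p_integral:
  assumes "prime p" "padic_cong p N x 0" "p_integral p y"
  shows "padic_cong p N (x * y) 0"
  using assms p_integral_mult[of p "x / of_nat p ^ N" y]
  by (simp add: padic_cong_0_iff prime_gt_0_nat)

lemma padic_cong_0_mono:
  assumes "prime p" "N \<le> M" "padic_cong p M x 0"
  shows "padic_cong p N x 0"
proof -
  have p: "p > 0" using assms(1) by (rule prime_gt_0_nat)
  have "(of_nat p ^ M :: rat) = of_nat p ^ N * of_nat p ^ (M - N)"
    using assms(2) by (simp flip: power_add)
  then have eq: "x / of_nat p ^ N = x / of_nat p ^ M * of_nat (p ^ (M - N))"
    using p by (simp add: field_simps)
  from assms(3) have "p_integral p (x / of_nat p ^ M)" by (simp add: padic_cong_0_iff p)
  from p_integral_mult[OF assms(1) this p_integral_of_nat[OF assms(1)]]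
  show ?thesis unfolding padic_cong_0_iff[OF p] eq .
qed

lemma padic_cong_0_prime_power:
  "prime p \<Longrightarrow> p_integral p y \<Longrightarrow> padic_cong p N (of_nat p ^ N * y) 0"
  by (simp add: padic_cong_0_iff prime_gt_0_nat)

lemma padic_cong_0_fraction:
  assumes "int p ^ N dvd a" "\<not> int p dvd d"
  shows "padic_cong p N (of_int a / of_int d) 0"
proof -
  obtain k where "a = int p ^ N * k" using assms(1) by (rule dvdE)
  then show ?thesis unfolding padic_cong_def using assms(2) by (intro exI[of _ k] exI[of _ d]) simp
qed

lemma padic_cong_mult_p_integral:
  assumes "prime p" "padic_cong p N x y" "p_integral p z"
  shows "padic_cong p N (z * x) (z * y)"
proof -
  have "padic_cong p N ((x - y) * z) 0"
    using assms padic_cong_iff_diff by (blast intro: padic_cong_0_mult_p_integral)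
  then show ?thesis using padic_cong_iff_diff by (metis mult.commute right_diff_distrib)
qed

definition p_integral_poly :: "nat \<Rightarrow> rat poly \<Rightarrow> bool" where
  "p_integral_poly p q \<longleftrightarrow> (\<forall>i. p_integral p (coeff q i))"

lemma p_integral_poly_mult:
  "prime p \<Longrightarrow> p_integral_poly p q \<Longrightarrow> p_integral_poly p r \<Longrightarrow> p_integral_poly p (q * r)"
  unfolding p_integral_poly_def coeff_mult by (auto intro!: p_integral_sum p_integral_mult)

lemma p_integral_poly_1: "prime p \<Longrightarrow> p_integral_poly p 1"
  unfolding p_integral_poly_def by (simp add: coeff_1 p_integral_0 p_integral_1)

lemma p_integral_poly_prod:
  "prime p \<Longrightarrow> (\<And>i. i \<in> A \<Longrightarrow> p_integral_poly p (f i)) \<Longrightarrow> p_integral_poly p (\<Prod>i\<in>A. f i)"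
  by (induction A rule: infinite_finite_induct)
     (auto intro: p_integral_poly_mult p_integral_poly_1)

lemma p_integral_poly_power: "prime p \<Longrightarrow> p_integral_poly p q \<Longrightarrow> p_integral_poly p (q ^ m)"
  using p_integral_poly_prod[of p "{..<m}" "\<lambda>_. q"] by simp

lemma p_integral_poly_linear: "prime p \<Longrightarrow> p_integral p a \<Longrightarrow> p_integral_poly p [:1, a:]"
  unfolding p_integral_poly_def
  by (simp add: coeff_pCons p_integral_0 p_integral_1 split: nat.split)

lemma p_integral_poly_diff:
  "prime p \<Longrightarrow> p_integral_poly p q \<Longrightarrow> p_integral_poly p r \<Longrightarrow> p_integral_poly p (q - r)"
  unfolding p_integral_poly_def by (auto intro: p_integral_diff)

text \<open>At \<open>x = p\<^sup>h\<close> the first possibly nonzero term \<open>q\<^sub>n x\<^sup>n\<close> gains one extra factor \<open>p\<close>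
  from \<open>q\<^sub>n\<close>; all later terms already carry \<open>p\<^bsup>h(n+1)\<^esup>\<close>.\<close>
lemma padic_cong_poly_prime_power:
  assumes p: "prime p" and "h > 0" and q: "p_integral_poly p q"
    and low: "\<And>i. i < n \<Longrightarrow> coeff q i = 0" and lead: "padic_cong p 1 (coeff q n) 0"
  shows "padic_cong p (h * n + 1) (poly q (of_nat p ^ h)) 0"
proof -
  have "padic_cong p (h * n + 1) (coeff q i * (of_nat p ^ h) ^ i) 0" for i
  proof (cases i n rule: linorder_cases)
    case less
    then show ?thesis using low padic_cong_refl[OF p] by simp
  next
    case equal
    have "padic_cong p (1 + h * n) (coeff q n * (of_nat p ^ (h * n) * 1)) 0"
      using p lead by (intro padic_cong_0_mult padic_cong_0_prime_power p_integral_1)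
    then show ?thesis using equal by (simp add: power_mult)
  next
    case greater
    have "padic_cong p (h * i) (of_nat p ^ (h * i) * coeff q i) 0"
      using p q by (intro padic_cong_0_prime_power) (simp_all add: p_integral_poly_def)
    moreover have "h * n + 1 \<le> h * i"
      using greater \<open>h > 0\<close> mult_le_mono2[of "n + 1" i h] by simp
    ultimately show ?thesis using padic_cong_0_mono[OF p] by (simp add: power_mult mult.commute)
  qed
  then show ?thesis unfolding poly_altdef by (intro padic_cong_0_sum p)
qed

section \<open>Logarithmic derivatives\<close>

definition fps_logderiv :: "rat fps \<Rightarrow> rat fps" where
  "fps_logderiv f = fps_deriv f * inverse f"

lemma fps_logderiv_mult:
  assumes "f $ 0 \<noteq> 0" "g $ 0 \<noteq> 0"
  shows "fps_logderiv (f * g) = fps_logderiv f + fps_logderiv g"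
proof -
  have "f * inverse f = 1" "g * inverse g = 1" using assms by (auto intro: inverse_mult_eq_1')
  moreover have "(f * fps_deriv g + fps_deriv f * g) * (inverse f * inverse g)
     = fps_deriv g * inverse g * (f * inverse f) + fps_deriv f * inverse f * (g * inverse g)"
    by (simp add: algebra_simps)
  ultimately show ?thesis unfolding fps_logderiv_def by (simp add: fps_inverse_mult)
qed

lemma fps_logderiv_power:
  assumes "f $ 0 \<noteq> 0"
  shows "fps_logderiv (f ^ m) = fps_const (of_nat m) * fps_logderiv f"
proof (induction m)
  case 0
  then show ?case by (simp add: fps_logderiv_def)
next
  case (Suc m)
  have "fps_logderiv (f ^ Suc m) = fps_logderiv f + fps_logderiv (f ^ m)"
    using assms by (simp add: fps_logderiv_mult fps_power_zeroth)
  then show ?case using Suc by (simp add: algebra_simps fps_const_add[symmetric])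
qed

lemma fps_prod_nth_0: "(\<Prod>i\<in>A. f i) $ 0 = (\<Prod>i\<in>A. f i $ 0 :: 'a :: comm_ring_1)"
  by (induction A rule: infinite_finite_induct) auto

lemma fps_logderiv_prod:
  assumes "finite A" "\<And>i. i \<in> A \<Longrightarrow> f i $ 0 = 1"
  shows "fps_logderiv (\<Prod>i\<in>A. f i) = (\<Sum>i\<in>A. fps_logderiv (f i))"
  using assms
proof (induction A rule: finite_induct)
  case (insert x F)
  have "(\<Prod>i\<in>F. f i) $ 0 = 1"
    using insert by (simp add: fps_prod_nth_0)
  then show ?case using insert by (simp add: fps_logderiv_mult)
qed (simp add: fps_logderiv_def)

lemma fps_logderiv_inverse:
  assumes "f $ 0 \<noteq> 0"
  shows "fps_logderiv (inverse f) = - fps_logderiv f"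
proof -
  have "f * inverse f = 1" using assms by (auto intro: inverse_mult_eq_1')
  moreover have "- fps_deriv f * (inverse f)\<^sup>2 * f = - fps_deriv f * inverse f * (f * inverse f)"
    by (simp add: power2_eq_square algebra_simps)
  ultimately show ?thesis unfolding fps_logderiv_def using assms by (simp add: fps_inverse_deriv)
qed

lemma fps_logderiv_linear_nth:
  "fps_logderiv (1 + fps_const a * fps_X) $ m = a * (- a) ^ m"
proof -
  have "inverse (1 + fps_const a * fps_X) = Abs_fps (\<lambda>m. (- a) ^ m)"
  proof (rule fps_inverse_unique, rule fps_ext)
    fix n
    show "((1 + fps_const a * fps_X) * Abs_fps (\<lambda>m. (- a) ^ m)) $ n = (1 :: rat fps) $ n"
      by (cases n) (simp_all add: algebra_simps)
  qed
  then show ?thesis unfolding fps_logderiv_def by simp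
qed

lemma fps_deriv_eq_mult_nth:
  fixes Q D :: "rat fps"
  assumes deriv: "fps_deriv Q = Q * D" and "Q $ 0 = 1" and "n > 0"
    and D: "\<And>m. m + 1 < n \<Longrightarrow> D $ m = 0"
  shows "\<And>k. 0 < k \<Longrightarrow> k < n \<Longrightarrow> Q $ k = 0" and "Q $ n = D $ (n - 1) / of_nat n"
proof -
  have step: "of_nat k * Q $ k = D $ (k - 1)"
    if "0 < k" "\<And>l. 0 < l \<Longrightarrow> l < k \<Longrightarrow> Q $ l = 0" for k
  proof -
    have "(Q * D) $ (k - 1) = (\<Sum>i\<in>{0}. Q $ i * D $ (k - 1 - i))"
      unfolding fps_mult_nth using that by (intro sum.mono_neutral_right) auto
    moreover have "fps_deriv Q $ (k - 1) = of_nat k * Q $ k" using that(1) by simp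
    ultimately show ?thesis using deriv \<open>Q $ 0 = 1\<close> by simp
  qed
  show low: "Q $ k = 0" if "0 < k" "k < n" for k
    using that
  proof (induction k rule: less_induct)
    case (less k)
    then have "of_nat k * Q $ k = 0" using step[of k] D[of "k - 1"] by simp
    then show ?case using less by simp
  qed
  have "of_nat n * Q $ n = D $ (n - 1)" using step[of n] low \<open>n > 0\<close> by simp
  then show "Q $ n = D $ (n - 1) / of_nat n" using \<open>n > 0\<close> by (simp add: field_simps)
qed

lemma fps_const_nat_parts_diff:
  "fps_const (of_nat (nat x)) * f - fps_const (of_nat (nat (- x))) * f = fps_const (of_int x) * (f :: rat fps)"
proof (cases "x \<ge> 0")
  case True
  then have "nat (- x) = 0" "of_nat (nat x) = (of_int x :: rat)" by simp_all
  then show ?thesis by simp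
next
  case False
  then have "nat x = 0" "of_nat (nat (- x)) = - (of_int x :: rat)" by simp_all
  then show ?thesis by (simp flip: fps_const_neg)
qed

lemma fps_logderiv_linear_powers_nth:
  fixes a :: "'a \<Rightarrow> rat" and e :: "'a \<Rightarrow> int"
  defines "L t \<equiv> 1 + fps_const (a t) * fps_X"
  assumes "finite F"
  shows "fps_logderiv ((\<Prod>t\<in>F. L t ^ nat (e t)) * inverse (\<Prod>t\<in>F. L t ^ nat (- e t))) $ m
    = (- 1) ^ m * (\<Sum>t\<in>F. of_int (e t) * a t ^ (m + 1))"
proof -
  have L0: "L t $ 0 = 1" "(L t ^ k) $ 0 = 1" for t k by (simp_all add: L_def fps_power_zeroth)
  then have "fps_logderiv ((\<Prod>t\<in>F. L t ^ nat (e t)) * inverse (\<Prod>t\<in>F. L t ^ nat (- e t)))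
      = (\<Sum>t\<in>F. fps_const (of_nat (nat (e t))) * fps_logderiv (L t)
          - fps_const (of_nat (nat (- e t))) * fps_logderiv (L t))"
    using assms(2) by (simp add: fps_prod_nth_0 fps_logderiv_mult fps_logderiv_inverse
        fps_logderiv_prod fps_logderiv_power sum_subtractf)
  also have "\<dots> = (\<Sum>t\<in>F. fps_const (of_int (e t)) * fps_logderiv (L t))"
    by (simp add: fps_const_nat_parts_diff)
  finally have D: "fps_logderiv ((\<Prod>t\<in>F. L t ^ nat (e t)) * inverse (\<Prod>t\<in>F. L t ^ nat (- e t)))
      = (\<Sum>t\<in>F. fps_const (of_int (e t)) * fps_logderiv (L t))" .
  have summand: "of_int (e t) * (a t * (- a t) ^ m) = (- 1) ^ m * (of_int (e t) * a t ^ (m + 1))"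
    for t by (simp only: power_minus[of "a t"] power_add power_one_right mult_ac)
  show ?thesis unfolding D
    by (simp only: fps_sum_nth fps_mult_left_const_nth L_def fps_logderiv_linear_nth summand
        sum_distrib_left)
qed

lemma fps_diff_nth_eq_quotient_nth:
  fixes f g :: "'a :: field fps"
  assumes "g $ 0 = 1" and low: "\<And>i. i < n \<Longrightarrow> (f * inverse g - 1) $ i = 0"
  shows "\<And>k. k < n \<Longrightarrow> (f - g) $ k = 0" and "(f - g) $ n = (f * inverse g - 1) $ n"
proof -
  have "inverse g * g = 1" using assms(1) by (simp add: inverse_mult_eq_1)
  then have "f - g = (f * inverse g - 1) * g" by (simp add: algebra_simps mult.assoc)
  then have coeff: "(f - g) $ k = (\<Sum>i = 0..k. (f * inverse g - 1) $ i * g $ (k - i))" for k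
    by (simp only: fps_mult_nth)
  show "(f - g) $ k = 0" if "k < n" for k
    unfolding coeff using that low by (intro sum.neutral) simp
  have "(f - g) $ n = (\<Sum>i\<in>{n}. (f * inverse g - 1) $ i * g $ (n - i))"
    unfolding coeff using low by (intro sum.mono_neutral_right) auto
  then show "(f - g) $ n = (f * inverse g - 1) $ n" using assms(1) by simp
qed

text \<open>\<open>A - B\<close> is the numerator of \<open>Q - 1\<close> for \<open>Q = \<Prod> (1 + a\<^sub>t X)\<^bsup>e\<^sub>t\<^esup> = A / B\<close>, and the
  logarithmic derivative \<open>D\<close> of \<open>Q\<close> has the power sums \<open>\<Sum> e\<^sub>t a\<^sub>t\<^sup>m\<close> as coefficients (up to sign);
  \<open>Q' = Q D\<close> then determines the first nonzero coefficient of \<open>Q - 1\<close>.\<close>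
lemma coeff_prod_linear_powers_diff:
  fixes F :: "'a set" and a :: "'a \<Rightarrow> rat" and e :: "'a \<Rightarrow> int"
  defines "A \<equiv> \<Prod>t\<in>F. [:1, a t:] ^ nat (e t)" and "B \<equiv> \<Prod>t\<in>F. [:1, a t:] ^ nat (- e t)"
  assumes fin: "finite F" and n: "n > 0"
    and moments: "\<And>m. 0 < m \<Longrightarrow> m < n \<Longrightarrow> (\<Sum>t\<in>F. of_int (e t) * a t ^ m) = 0"
  shows "\<And>k. k < n \<Longrightarrow> coeff (A - B) k = 0"
    and "coeff (A - B) n = (- 1) ^ (n - 1) * (\<Sum>t\<in>F. of_int (e t) * a t ^ n) / of_nat n"
proof -
  define L where "L t = 1 + fps_const (a t) * fps_X" for t
  have A: "fps_of_poly A = (\<Prod>t\<in>F. L t ^ nat (e t))"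
    and B: "fps_of_poly B = (\<Prod>t\<in>F. L t ^ nat (- e t))"
    unfolding A_def B_def L_def by (simp_all add: fps_of_poly_prod fps_of_poly_power fps_of_poly_linear')
  have B0: "fps_of_poly B $ 0 = 1" unfolding B by (simp add: fps_prod_nth_0 L_def fps_power_zeroth)
  define Q where "Q = fps_of_poly A * inverse (fps_of_poly B)"
  define D where "D = fps_logderiv Q"
  have Q0: "Q $ 0 = 1" unfolding Q_def A using B0 by (simp add: fps_prod_nth_0 L_def fps_power_zeroth)
  have D_nth: "D $ m = (- 1) ^ m * (\<Sum>t\<in>F. of_int (e t) * a t ^ (m + 1))" for m
    unfolding D_def Q_def A B L_def by (rule fps_logderiv_linear_powers_nth[OF fin])
  have "Q * inverse Q = 1" using Q0 by (auto intro: inverse_mult_eq_1')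
  moreover have "Q * (fps_deriv Q * inverse Q) = fps_deriv Q * (Q * inverse Q)" by (simp only: mult_ac)
  ultimately have "fps_deriv Q = Q * D" unfolding D_def fps_logderiv_def by simp
  moreover have "D $ m = 0" if "m + 1 < n" for m
    using moments[of "m + 1"] that by (simp add: D_nth)
  ultimately have Q_low: "\<And>k. 0 < k \<Longrightarrow> k < n \<Longrightarrow> Q $ k = 0"
    and Q_n: "Q $ n = D $ (n - 1) / of_nat n"
    using fps_deriv_eq_mult_nth[of Q D n, OF _ Q0 n] by simp_all
  have Q1_low: "(Q - 1) $ i = 0" if "i < n" for i
    using Q0 Q_low[of i] that by (cases "i = 0") simp_all
  note AB = fps_diff_nth_eq_quotient_nth[of "fps_of_poly B" n "fps_of_poly A", folded Q_def]
  show "coeff (A - B) k = 0" if "k < n" for k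
    using AB(1) B0 Q1_low that by simp
  show "coeff (A - B) n = (- 1) ^ (n - 1) * (\<Sum>t\<in>F. of_int (e t) * a t ^ n) / of_nat n"
    using AB(2) B0 Q1_low Q_n n by (simp add: D_nth)
qed

section \<open>Power sums of pronic numbers\<close>

text \<open>\<open>odd_power_diff_poly l\<close> is the polynomial \<open>D\<^sub>l\<close> with \<open>D\<^sub>l(x (x + 1)) = (x + 1)\<^bsup>2l+1\<^esup> - x\<^bsup>2l+1\<^esup>\<close>;
  the recursion comes from \<open>X\<^sup>2 + Y\<^sup>2 = 1 + 2XY\<close> for \<open>X - Y = 1\<close>.\<close>
fun odd_power_diff_poly :: "nat \<Rightarrow> rat poly" where
  "odd_power_diff_poly 0 = 1"
| "odd_power_diff_poly (Suc 0) = [:1, 3:]"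
| "odd_power_diff_poly (Suc (Suc l)) = odd_power_diff_poly (Suc l)
     + smult 2 (pCons 0 (odd_power_diff_poly (Suc l)))
     - pCons 0 (pCons 0 (odd_power_diff_poly l))"

lemma power_diff_recurrence:
  fixes X Y A B :: rat
  assumes "X - Y = 1"
  shows "(1 + 2 * (X * Y)) * (A * X ^ 2 - B * Y ^ 2) - (X * Y) ^ 2 * (A - B)
         = A * X ^ 2 * X ^ 2 - B * Y ^ 2 * Y ^ 2"
proof -
  have "X = Y + 1" using assms by simp
  then have "1 + 2 * (X * Y) = X ^ 2 + Y ^ 2" by (simp add: power2_eq_square algebra_simps)
  then show ?thesis by (simp add: power2_eq_square algebra_simps)
qed

lemma poly_odd_power_diff_poly:
  "poly (odd_power_diff_poly l) (x * (x + 1)) = (x + 1) ^ (2 * l + 1) - (x :: rat) ^ (2 * l + 1)"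
proof (induction l rule: odd_power_diff_poly.induct)
  case 2
  then show ?case by (simp add: algebra_simps power3_eq_cube power2_eq_square)
next
  case (3 l)
  let ?D = "\<lambda>l. poly (odd_power_diff_poly l) (x * (x + 1))"
  have pow: "(y :: rat) ^ (2 * l + 1) * y ^ 2 * y ^ 2 = y ^ (2 * Suc (Suc l) + 1)" for y
    by (simp only: power_add [symmetric]) simp
  have "?D (Suc (Suc l)) = (1 + 2 * ((x + 1) * x)) * ?D (Suc l) - ((x + 1) * x) ^ 2 * ?D l"
    by (simp add: power2_eq_square algebra_simps)
  also have "\<dots> = (1 + 2 * ((x + 1) * x))
        * ((x + 1) ^ (2 * l + 1) * (x + 1) ^ 2 - x ^ (2 * l + 1) * x ^ 2)
      - ((x + 1) * x) ^ 2 * ((x + 1) ^ (2 * l + 1) - x ^ (2 * l + 1))"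
    using 3 by (simp add: power_add power_mult_distrib power2_eq_square mult_ac)
  also have "\<dots> = (x + 1) ^ (2 * l + 1) * (x + 1) ^ 2 * (x + 1) ^ 2 - x ^ (2 * l + 1) * x ^ 2 * x ^ 2"
    by (rule power_diff_recurrence) simp
  finally show ?case by (simp only: pow)
qed simp

lemma odd_power_diff_poly_degree:
  "degree (odd_power_diff_poly l) \<le> l \<and> coeff (odd_power_diff_poly l) l = of_nat (2 * l + 1)"
proof (induction l rule: odd_power_diff_poly.induct)
  case (3 l)
  let ?D = odd_power_diff_poly
  have "degree (smult 2 (pCons 0 (?D (Suc l)))) \<le> Suc (Suc l)"
    using 3 degree_pCons_le[of 0 "?D (Suc l)"] degree_smult_le[of 2 "pCons 0 (?D (Suc l))"]
    by linarith
  moreover have "degree (pCons 0 (pCons 0 (?D l))) \<le> Suc (Suc l)"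
    using 3 degree_pCons_le[of 0 "?D l"] degree_pCons_le[of 0 "pCons 0 (?D l)"] by linarith
  moreover have "degree (?D (Suc l)) \<le> Suc (Suc l)" using 3 by simp
  ultimately have "degree (?D (Suc (Suc l))) \<le> Suc (Suc l)"
    by (simp only: odd_power_diff_poly.simps) (intro degree_diff_le degree_add_le)
  moreover have "coeff (?D (Suc l)) (Suc (Suc l)) = 0" using 3 by (intro coeff_eq_0) auto
  ultimately show ?case using 3 by simp
qed simp_all

lemma poly_in_span_odd_power_diff_poly:
  "degree (q :: rat poly) \<le> m \<Longrightarrow> \<exists>\<alpha>. \<forall>s. poly q s = (\<Sum>l\<le>m. \<alpha> l * poly (odd_power_diff_poly l) s)"
proof (induction m arbitrary: q)
  case 0
  then show ?case by (intro exI[of _ "\<lambda>_. coeff q 0"]) (simp add: poly_altdef)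
next
  case (Suc m)
  define c where "c = coeff q (Suc m) / of_nat (2 * Suc m + 1)"
  define q' where "q' = q - smult c (odd_power_diff_poly (Suc m))"
  have "degree q' \<le> Suc m" unfolding q'_def using Suc.prems odd_power_diff_poly_degree[of "Suc m"]
    by (intro degree_diff_le) (auto intro: order.trans[OF degree_smult_le])
  moreover have "coeff q' (Suc m) = 0"
    unfolding q'_def c_def using odd_power_diff_poly_degree[of "Suc m"] by (simp del: of_nat_Suc)
  ultimately have "degree q' \<le> m"
    by (metis le_SucE leading_coeff_0_iff degree_0 not_less_eq_eq zero_le)
  then obtain \<alpha> where \<alpha>: "\<And>s. poly q' s = (\<Sum>l\<le>m. \<alpha> l * poly (odd_power_diff_poly l) s)"
    using Suc.IH by blast
  have "poly q s = (\<Sum>l\<le>Suc m. (\<alpha>(Suc m := c)) l * poly (odd_power_diff_poly l) s)" for s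
    using \<alpha>[of s] by (simp add: q'_def)
  then show ?case by blast
qed

text \<open>Expand \<open>s\<^sup>m\<close> in the \<open>D\<^sub>l\<close>; each \<open>D\<^sub>l(j (j + 1))\<close> telescopes in \<open>j\<close>.\<close>
lemma sum_pronic_power_odd_poly:
  "\<exists>\<alpha> :: nat \<Rightarrow> rat. \<forall>b. (\<Sum>j<b. of_nat (j * (j + 1)) ^ m) = (\<Sum>l\<le>m. \<alpha> l * of_nat b ^ (2 * l + 1))"
proof -
  obtain \<alpha> where \<alpha>: "\<And>s. s ^ m = (\<Sum>l\<le>m. \<alpha> l * poly (odd_power_diff_poly l) s)"
    using poly_in_span_odd_power_diff_poly[of "monom (1 :: rat) m" m]
    by (auto simp: degree_monom_eq poly_monom)
  have telescope: "(\<Sum>j<b. (of_nat j + 1) ^ (2 * l + 1) - of_nat j ^ (2 * l + 1)) = (of_nat b :: rat) ^ (2 * l + 1)"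
    for b l
    using sum_lessThan_telescope[of "\<lambda>j. (of_nat j :: rat) ^ (2 * l + 1)" b] by (simp add: add.commute)
  have "(\<Sum>j<b. of_nat (j * (j + 1)) ^ m)
      = (\<Sum>j<b. \<Sum>l\<le>m. \<alpha> l * ((of_nat j + 1) ^ (2 * l + 1) - of_nat j ^ (2 * l + 1)))" for b
    by (simp only: \<alpha> of_nat_mult of_nat_add of_nat_1 poly_odd_power_diff_poly)
  also have "\<dots> b = (\<Sum>l\<le>m. \<Sum>j<b. \<alpha> l * ((of_nat j + 1) ^ (2 * l + 1) - of_nat j ^ (2 * l + 1)))"
    for b by (rule sum.swap)
  also have "\<dots> b = (\<Sum>l\<le>m. \<alpha> l * of_nat b ^ (2 * l + 1))" for b
    by (simp only: sum_distrib_left [symmetric] telescope)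
  finally show ?thesis by blast
qed

lemma weighted_sum_pronic_powers_eq_0:
  fixes b :: "nat \<Rightarrow> nat" and c :: "nat \<Rightarrow> int"
  assumes "\<forall>j<n. (\<Sum>i<k. c i * int (b i) ^ (2 * j + 1)) = 0" and "m < n"
  shows "(\<Sum>i<k. of_int (c i) * (\<Sum>j<b i. of_nat (j * (j + 1)) ^ m :: rat)) = 0"
proof -
  obtain \<alpha> where \<alpha>: "\<And>b. (\<Sum>j<b. of_nat (j * (j + 1)) ^ m :: rat) = (\<Sum>l\<le>m. \<alpha> l * of_nat b ^ (2 * l + 1))"
    using sum_pronic_power_odd_poly[of m] by blast
  have "(\<Sum>i<k. of_int (c i) * of_nat (b i) ^ (2 * l + 1) :: rat) = 0" if "l \<le> m" for l
  proof -
    have "(\<Sum>i<k. c i * int (b i) ^ (2 * l + 1)) = 0" using assms that by simp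
    from arg_cong[OF this, of "of_int :: int \<Rightarrow> rat"] show ?thesis by simp
  qed
  then have "(\<Sum>l\<le>m. \<alpha> l * (\<Sum>i<k. of_int (c i) * of_nat (b i) ^ (2 * l + 1))) = 0"
    by (intro sum.neutral) simp
  moreover have "(\<Sum>i<k. of_int (c i) * (\<Sum>l\<le>m. \<alpha> l * of_nat (b i) ^ (2 * l + 1)))
      = (\<Sum>i<k. \<Sum>l\<le>m. \<alpha> l * (of_int (c i) * of_nat (b i) ^ (2 * l + 1)))"
    by (simp add: sum_distrib_left mult.left_commute)
  moreover have "\<dots> = (\<Sum>l\<le>m. \<alpha> l * (\<Sum>i<k. of_int (c i) * of_nat (b i) ^ (2 * l + 1)))"
    by (simp only: sum.swap[of _ "{..<k}"] sum_distrib_left)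
  ultimately show ?thesis by (simp only: \<alpha>)
qed

section \<open>A reciprocal sum modulo \<open>p\<close>\<close>

lemma sum_powers_binomial:
  "(p :: nat) ^ (e + 1) = (\<Sum>i\<le>e. (e + 1 choose i) * (\<Sum>r<p. r ^ i))"
proof -
  define P where "P i = (\<Sum>r<p. r ^ i)" for i
  have "(r + 1) ^ (e + 1) = (\<Sum>i\<le>e + 1. (e + 1 choose i) * r ^ i)" for r :: nat
    using binomial_ring[of r 1 "e + 1"] by simp
  then have "(\<Sum>r<p. (r + 1) ^ (e + 1)) = (\<Sum>r<p. \<Sum>i\<le>e + 1. (e + 1 choose i) * r ^ i)"
    by simp
  also have "\<dots> = (\<Sum>i\<le>e + 1. (e + 1 choose i) * P i)"
    unfolding P_def by (subst sum.swap) (simp add: sum_distrib_left)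
  also have "\<dots> = (\<Sum>i\<le>e. (e + 1 choose i) * P i) + P (e + 1)"
    by simp
  finally have "(\<Sum>r<p. (r + 1) ^ (e + 1)) = (\<Sum>i\<le>e. (e + 1 choose i) * P i) + P (e + 1)" .
  moreover have "(\<Sum>r<p. (r + 1) ^ (e + 1)) + 0 ^ (e + 1) = P (e + 1) + p ^ (e + 1)"
    unfolding P_def using sum.lessThan_Suc_shift[of "\<lambda>r. r ^ (e + 1)" p] by simp
  ultimately show ?thesis unfolding P_def by simp
qed

lemma prime_dvd_sum_powers:
  fixes p :: nat
  assumes "prime p" "0 < e" "e < p - 1"
  shows "p dvd (\<Sum>r<p. r ^ e)"
  using assms(2,3)
proof (induction e rule: less_induct)
  case (less e)
  define P where "P i = (\<Sum>r<p. r ^ i)" for i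
  have "p dvd (e + 1 choose i) * P i" if "i < e" for i
    using less.IH[of i] that less.prems by (cases "i = 0") (simp_all add: P_def)
  then have sum_dvd: "p dvd (\<Sum>i<e. (e + 1 choose i) * P i)" by (intro dvd_sum) simp
  have "p ^ (e + 1) = (\<Sum>i<e. (e + 1 choose i) * P i) + (e + 1) * P e"
    unfolding P_def sum_powers_binomial[of p e] lessThan_Suc_atMost [symmetric] by simp
  moreover have "p dvd p ^ (e + 1)" using dvd_power[of "e + 1" p] by simp
  ultimately have "p dvd (\<Sum>i<e. (e + 1 choose i) * P i) + (e + 1) * P e"
    by simp
  then have "p dvd (e + 1) * P e" using sum_dvd by (simp only: dvd_add_right_iff)
  moreover have "\<not> p dvd e + 1" using less.prems by (auto dest: dvd_imp_le)
  ultimately show ?case using assms(1) prime_dvd_mult_iff unfolding P_def by blast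
qed

lemma cong_reflect_product_power:
  fixes p r n :: nat
  assumes "prime p" "0 < r" "r < p" "2 * n \<le> p - 1"
  shows "[(- 1) ^ n * int r ^ (p - 1 - 2 * n) * (int r * int (p - r)) ^ n = 1] (mod int p)"
proof -
  have "[int (p - r) = - int r] (mod int p)"
    using assms by (simp add: cong_iff_dvd_diff of_nat_diff)
  then have "[(- 1) ^ n * int r ^ (p - 1 - 2 * n) * (int r * int (p - r)) ^ n
             = (- 1) ^ n * int r ^ (p - 1 - 2 * n) * (int r * (- int r)) ^ n] (mod int p)"
    by (intro cong_mult cong_pow cong_refl)
  also have "(- 1) ^ n * int r ^ (p - 1 - 2 * n) * (int r * (- int r)) ^ n = int r ^ (p - 1)"
  proof -
    have "int r * (- int r) = (- 1) * int r ^ 2" by (simp add: power2_eq_square)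
    then have square: "(int r * (- int r)) ^ n = (- 1) ^ n * int r ^ (2 * n)"
      by (simp only: power_mult_distrib power_mult)
    have "p - 1 - 2 * n + 2 * n = p - 1" using assms(4) by simp
    then have "int r ^ (p - 1 - 2 * n) * int r ^ (2 * n) = int r ^ (p - 1)"
      by (simp only: power_add [symmetric])
    moreover have "(- 1 :: int) ^ n * (- 1) ^ n = 1" by (simp flip: power_mult_distrib)
    ultimately show ?thesis unfolding square by (metis mult.assoc mult.left_commute mult_1)
  qed
  also have "[int r ^ (p - 1) = 1] (mod int p)"
  proof -
    have "\<not> p dvd r" using assms by (auto dest: dvd_imp_le)
    then have "[r ^ (p - 1) = 1] (mod p)" using fermat_theorem[OF assms(1)] by blast
    then show ?thesis by (metis cong_int_iff of_nat_1 of_nat_power)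
  qed
  finally show ?thesis .
qed

lemma padic_cong_inverse_of_int:
  assumes "prime p" "\<not> int p dvd D" "[X * D = 1] (mod int p)"
  shows "padic_cong p 1 (inverse (of_int D)) (of_int X)"
proof -
  have "D \<noteq> 0" using assms(2) by auto
  then have "inverse (of_int D) - of_int X = (of_int (1 - X * D) / of_int D :: rat)"
    by (simp add: field_simps)
  moreover have "int p ^ 1 dvd 1 - X * D"
    using assms(3) by (simp add: cong_iff_dvd_diff dvd_diff_commute)
  ultimately show ?thesis
    using padic_cong_0_fraction[OF _ assms(2)] padic_cong_iff_diff by metis
qed

lemma padic_cong_inverse_reflect_product_power:
  fixes p r n :: nat
  assumes p: "prime p" and r: "0 < r" "r < p" and n: "2 * n \<le> p - 1"
  shows "padic_cong p 1 (inverse (of_nat (r * (p - r)) :: rat) ^ n)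
           (of_int ((- 1) ^ n * int r ^ (p - 1 - 2 * n)))"
proof -
  have "\<not> p dvd r" "\<not> p dvd p - r" using r by (auto dest: dvd_imp_le)
  then have "\<not> int p dvd int r * int (p - r)"
    using p by (simp add: prime_dvd_mult_iff flip: of_nat_mult)
  moreover have "prime (int p)" using p by simp
  ultimately have "\<not> int p dvd (int r * int (p - r)) ^ n"
    using prime_dvd_power by blast
  from padic_cong_inverse_of_int[OF p this cong_reflect_product_power[OF p r n]]
  show ?thesis
    by (simp only: power_inverse of_int_power of_int_mult of_int_of_nat_eq of_nat_mult)
qed

text \<open>Modulo \<open>p\<close>, \<open>1/(r (p - r))\<^sup>n \<equiv> (-1)\<^sup>n r\<^bsup>p-1-2n\<^esup>\<close>, and \<open>\<Sum>\<^sub>r r\<^bsup>p-1-2n\<^esup> \<equiv> 0\<close>.\<close>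
lemma padic_cong_sum_reflect_product_inverse_power:
  fixes p n :: nat
  assumes p: "prime p" and n: "0 < n" "2 * n + 1 < p"
  shows "padic_cong p 1 (\<Sum>r\<in>{1..(p - 1) div 2}. inverse (of_nat (r * (p - r)) :: rat) ^ n) 0"
proof -
  define e where "e = p - 1 - 2 * n"
  define g where "g r = inverse (of_nat (r * (p - r)) :: rat) ^ n" for r
  define X where "X r = (of_int ((- 1) ^ n * int r ^ e) :: rat)" for r
  have "odd p" using prime_odd_nat[OF p] n by simp
  then have "(\<Sum>r\<in>{1..p - 1}. g r) = (\<Sum>r\<in>{1..(p - 1) div 2}. g r + g (p - r))"
    by (rule sum.reflect_half_interval)
  also have "\<dots> = (\<Sum>r\<in>{1..(p - 1) div 2}. 2 * g r)"
    by (intro sum.cong) (auto simp: g_def mult.commute)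
  finally have full: "(\<Sum>r\<in>{1..p - 1}. g r) = 2 * (\<Sum>r\<in>{1..(p - 1) div 2}. g r)"
    by (simp add: sum_distrib_left)
  have "padic_cong p 1 (g r - X r) 0" if "r \<in> {1..p - 1}" for r
    using padic_cong_inverse_reflect_product_power[OF p, of r n] that n padic_cong_iff_diff
    unfolding g_def X_def e_def by auto
  then have "padic_cong p 1 (\<Sum>r\<in>{1..p - 1}. g r - X r) 0"
    by (rule padic_cong_0_sum[OF p])
  moreover have "padic_cong p 1 (\<Sum>r\<in>{1..p - 1}. X r) 0"
  proof -
    have "{..<p} = insert 0 {1..p - 1}" using n by auto
    moreover have "0 < e" "e < p - 1" using n unfolding e_def by auto
    ultimately have "p dvd (\<Sum>r\<in>{1..p - 1}. r ^ e)"
      using prime_dvd_sum_powers[OF p, of e] by (simp add: zero_power)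
    then have "int p ^ 1 dvd (- 1) ^ n * int (\<Sum>r\<in>{1..p - 1}. r ^ e)"
      by (simp only: power_one_right int_dvd_int_iff dvd_mult)
    from padic_cong_0_fraction[OF this, of 1] show ?thesis
      using prime_gt_1_nat[OF p] by (simp add: X_def sum_distrib_left)
  qed
  ultimately have "padic_cong p 1 ((\<Sum>r\<in>{1..p - 1}. g r - X r) + (\<Sum>r\<in>{1..p - 1}. X r)) 0"
    by (rule padic_cong_0_add[OF p])
  moreover have "\<not> int p dvd 2" using n by (auto dest: zdvd_imp_le)
  ultimately have "padic_cong p 1 ((\<Sum>r\<in>{1..p - 1}. g r) * (of_int 1 / of_int 2)) 0"
    using p by (intro padic_cong_0_mult_p_integral p_integral_fraction) (simp_all add: sum_subtractf)
  moreover have "(\<Sum>r\<in>{1..p - 1}. g r) * (of_int 1 / of_int 2) = (\<Sum>r\<in>{1..(p - 1) div 2}. g r)"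
    unfolding full by simp
  ultimately show ?thesis unfolding g_def by simp
qed

section \<open>Factorials of multiples of an odd number\<close>

lemma fact_add_eq_fact_mult_prod: "fact (m + n) = (fact m :: nat) * (\<Prod>i\<in>{1..n}. m + i)"
  by (induction n) (simp_all add: mult_ac)

lemma fact_mult_odd:
  fixes p b :: nat
  assumes "odd p"
  shows "fact (b * p) = fact b * p ^ b
    * (\<Prod>j<b. \<Prod>r\<in>{1..(p - 1) div 2}. r * (p - r) + p ^ 2 * (j * (j + 1)))"
proof (induction b)
  case (Suc b)
  have pair: "(b * p + r) * (b * p + (p - r)) = r * (p - r) + p ^ 2 * (b * (b + 1))" if "r \<le> p" for r
  proof -
    obtain q where "p = r + q" using \<open>r \<le> p\<close> le_Suc_ex by blast
    then show ?thesis by (simp add: algebra_simps power2_eq_square)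
  qed
  have "{1..p} = insert p {1..p - 1}" "p \<notin> {1..p - 1}" using assms by (auto elim: oddE)
  then have "(\<Prod>i\<in>{1..p}. b * p + i) = (b * p + p) * (\<Prod>i\<in>{1..p - 1}. b * p + i)" by simp
  also have "(\<Prod>i\<in>{1..p - 1}. b * p + i) = (\<Prod>r\<in>{1..(p - 1) div 2}. (b * p + r) * (b * p + (p - r)))"
    by (rule prod.reflect_half_interval[OF assms])
  also have "\<dots> = (\<Prod>r\<in>{1..(p - 1) div 2}. r * (p - r) + p ^ 2 * (b * (b + 1)))"
    by (rule prod.cong[OF refl], rule pair) auto
  finally have step: "(\<Prod>i\<in>{1..p}. b * p + i)
      = Suc b * p * (\<Prod>r\<in>{1..(p - 1) div 2}. r * (p - r) + p ^ 2 * (b * (b + 1)))"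
    by simp
  have "fact (Suc b * p) = fact (b * p + p)" by (simp add: algebra_simps)
  also have "\<dots> = fact (b * p) * (\<Prod>i\<in>{1..p}. b * p + i)" by (rule fact_add_eq_fact_mult_prod)
  finally show ?case unfolding step Suc by (simp add: algebra_simps)
qed simp

lemma fact_mult_odd_rat:
  fixes p b :: nat
  assumes "odd p"
  defines "A \<equiv> {1..(p - 1) div 2}"
  shows "(fact (b * p) :: rat) = fact b * (of_nat p * (\<Prod>r\<in>A. of_nat (r * (p - r)))) ^ b
    * (\<Prod>j<b. \<Prod>r\<in>A. 1 + of_nat (j * (j + 1)) * inverse (of_nat (r * (p - r))) * of_nat p ^ 2)"
proof -
  have factor: "(of_nat (r * (p - r) + p ^ 2 * (j * (j + 1))) :: rat)
      = of_nat (r * (p - r)) * (1 + of_nat (j * (j + 1)) * inverse (of_nat (r * (p - r))) * of_nat p ^ 2)"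
    if "r \<in> A" for r j
  proof -
    have "(of_nat (r * (p - r)) :: rat) \<noteq> 0" using that assms(1) by (auto simp: A_def elim: oddE)
    then show ?thesis by (simp add: field_simps)
  qed
  have "(fact (b * p) :: rat) = of_nat (fact (b * p))" by (rule of_nat_fact [symmetric])
  also have "\<dots> = fact b * of_nat p ^ b
      * (\<Prod>j<b. \<Prod>r\<in>A. of_nat (r * (p - r) + p ^ 2 * (j * (j + 1))))"
    unfolding A_def fact_mult_odd[OF assms(1)]
    by (simp only: of_nat_mult of_nat_prod of_nat_power of_nat_fact)
  also have "\<dots> = fact b * of_nat p ^ b * (\<Prod>j<b. (\<Prod>r\<in>A. of_nat (r * (p - r)))
      * (\<Prod>r\<in>A. 1 + of_nat (j * (j + 1)) * inverse (of_nat (r * (p - r))) * of_nat p ^ 2))"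
    by (rule arg_cong, rule prod.cong[OF refl])
       (simp only: prod.distrib [symmetric], rule prod.cong[OF refl], erule factor)
  also have "\<dots> = fact b * (of_nat p * (\<Prod>r\<in>A. of_nat (r * (p - r)))) ^ b
    * (\<Prod>j<b. \<Prod>r\<in>A. 1 + of_nat (j * (j + 1)) * inverse (of_nat (r * (p - r))) * of_nat p ^ 2)"
    by (simp add: prod.distrib power_mult_distrib mult_ac)
  finally show ?thesis .
qed

lemma prod_fact_mult_odd_powi:
  fixes p :: nat and b :: "nat \<Rightarrow> nat" and c :: "nat \<Rightarrow> int"
  assumes "odd p" and "(\<Sum>i<k. int (b i) * c i) = 0"
  defines "A \<equiv> {1..(p - 1) div 2}"
  shows "(\<Prod>i<k. (fact (b i * p) :: rat) powi c i) = (\<Prod>i<k. (fact (b i) :: rat) powi c i)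
    * (\<Prod>(i, j, r)\<in>(SIGMA i:{..<k}. {..<b i} \<times> A).
         (1 + of_nat (j * (j + 1)) * inverse (of_nat (r * (p - r))) * of_nat p ^ 2) powi c i)"
proof -
  define W where "W = of_nat p * (\<Prod>r\<in>A. of_nat (r * (p - r)) :: rat)"
  define G :: "nat \<Rightarrow> rat"
    where "G b = (\<Prod>j<b. \<Prod>r\<in>A. 1 + of_nat (j * (j + 1)) * inverse (of_nat (r * (p - r))) * of_nat p ^ 2)"
    for b
  have "W \<noteq> 0" using assms(1) by (auto simp: W_def A_def elim: oddE)
  then have W_cancel: "(\<Prod>i<k. W powi (int (b i) * c i)) = 1"
    using assms(2) by (simp add: prod_power_int_sum)
  have "(\<Prod>i<k. (fact (b i * p) :: rat) powi c i) = (\<Prod>i<k. (fact (b i) * W ^ b i * G (b i)) powi c i)"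
    using fact_mult_odd_rat[OF assms(1)] by (simp add: W_def G_def A_def)
  also have "\<dots> = (\<Prod>i<k. fact (b i) powi c i) * (\<Prod>i<k. W powi (int (b i) * c i)) * (\<Prod>i<k. G (b i) powi c i)"
    by (simp add: power_int_mult_distrib prod.distrib power_int_power)
  also have "(\<Prod>i<k. G (b i) powi c i) = (\<Prod>(i, j, r)\<in>(SIGMA i:{..<k}. {..<b i} \<times> A).
         (1 + of_nat (j * (j + 1)) * inverse (of_nat (r * (p - r))) * of_nat p ^ 2) powi c i)"
    by (simp add: G_def A_def prod.Sigma_lessThan_times power_int_prod)
  finally show ?thesis by (simp add: W_cancel)
qed

text \<open>The product is \<open>A(p\<^sup>h) / B(p\<^sup>h)\<close> for the polynomials \<open>A, B\<close> of
  \<open>coeff_prod_linear_powers_diff\<close>, and \<open>B(p\<^sup>h)\<close> is a \<open>p\<close>-adic unit.\<close>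
lemma padic_cong_prod_one_plus_powi:
  fixes F :: "'a set" and a :: "'a \<Rightarrow> rat" and e :: "'a \<Rightarrow> int"
  assumes p: "prime p" and h: "h > 0" and fin: "finite F" and n: "n > 0" "\<not> p dvd n"
    and a: "\<And>t. t \<in> F \<Longrightarrow> p_integral p (a t)"
    and moments: "\<And>m. 0 < m \<Longrightarrow> m < n \<Longrightarrow> (\<Sum>t\<in>F. of_int (e t) * a t ^ m) = 0"
    and top: "padic_cong p 1 (\<Sum>t\<in>F. of_int (e t) * a t ^ n) 0"
  shows "padic_cong p (h * n + 1) (\<Prod>t\<in>F. (1 + a t * of_nat p ^ h) powi e t) 1"
proof -
  define x where "x = (of_nat p ^ h :: rat)"
  define y where "y t = 1 + a t * x" for t
  define A where "A = (\<Prod>t\<in>F. [:1, a t:] ^ nat (e t))"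
  define B where "B = (\<Prod>t\<in>F. [:1, a t:] ^ nat (- e t))"
  have AB_low: "coeff (A - B) k = 0" if "k < n" for k
    unfolding A_def B_def using coeff_prod_linear_powers_diff(1)[of F n e a k] fin n moments that
    by blast
  have AB_top: "coeff (A - B) n = (- 1) ^ (n - 1) * (\<Sum>t\<in>F. of_int (e t) * a t ^ n) / of_nat n"
    unfolding A_def B_def using coeff_prod_linear_powers_diff(2)[of F n e a] fin n moments
    by blast
  have y: "p_unit p (y t)" if "t \<in> F" for t
  proof -
    have "padic_cong p h (of_nat p ^ h * a t) 0" by (rule padic_cong_0_prime_power[OF p a[OF that]])
    then have "padic_cong p 1 (a t * x) 0" using h p padic_cong_0_mono[of p 1 h]
      by (simp add: x_def mult.commute)
    then show ?thesis unfolding y_def by (rule p_unit_one_plus)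
  qed
  have poly_A: "poly A x = (\<Prod>t\<in>F. y t ^ nat (e t))"
    and poly_B: "poly B x = (\<Prod>t\<in>F. y t ^ nat (- e t))"
    unfolding A_def B_def y_def by (simp_all add: poly_prod mult.commute)
  have B_unit: "p_unit p (poly B x)" unfolding poly_B using y by (intro p_unit_prod p_unit_power p)
  have "(\<Prod>t\<in>F. inverse (y t ^ nat (- e t))) = inverse (\<Prod>t\<in>F. y t ^ nat (- e t))"
    using prod_inversef[of "\<lambda>t. y t ^ nat (- e t)" F] by (simp add: comp_def)
  then have prod_eq: "(\<Prod>t\<in>F. y t powi e t) = inverse (poly B x) * poly A x"
    unfolding poly_A poly_B by (simp add: power_int_eq_nat_parts p_unit_nonzero[OF y] prod.distrib mult.commute)
  have "padic_cong p (h * n + 1) (poly (A - B) x) 0"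
    unfolding x_def
  proof (rule padic_cong_poly_prime_power[OF p h])
    show "p_integral_poly p (A - B)" unfolding A_def B_def using p a
      by (intro p_integral_poly_diff p_integral_poly_prod p_integral_poly_power p_integral_poly_linear)
    have "p_integral p ((- 1) ^ (n - 1) / of_nat n)"
      using p_integral_fraction[of p "int n" "(- 1) ^ (n - 1)"] n(2) by simp
    from padic_cong_0_mult_p_integral[OF p top this]
    have "padic_cong p 1 ((\<Sum>t\<in>F. of_int (e t) * a t ^ n) * ((- 1) ^ (n - 1) / of_nat n)) 0" .
    moreover have "coeff (A - B) n = (\<Sum>t\<in>F. of_int (e t) * a t ^ n) * ((- 1) ^ (n - 1) / of_nat n)"
      unfolding AB_top by simp
    ultimately show "padic_cong p 1 (coeff (A - B) n) 0" by (simp only:)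
  qed (rule AB_low)
  then have "padic_cong p (h * n + 1) (poly A x) (poly B x)"
    using padic_cong_iff_diff by simp
  from padic_cong_mult_p_integral[OF p this p_unit_imp_p_integral[OF p_unit_inverse[OF B_unit]]]
  have "padic_cong p (h * n + 1) (\<Prod>t\<in>F. y t powi e t) 1"
    using p_unit_nonzero[OF B_unit] by (simp add: prod_eq)
  then show ?thesis by (simp add: y_def x_def)
qed

lemma sum_Sigma_product_powers:
  fixes s w :: "nat \<Rightarrow> rat" and c :: "nat \<Rightarrow> int"
  assumes "finite A"
  shows "(\<Sum>(i, j, r)\<in>(SIGMA i:{..<k}. {..<b i} \<times> A). of_int (c i) * (s j * w r) ^ m)
    = (\<Sum>r\<in>A. w r ^ m) * (\<Sum>i<k. of_int (c i) * (\<Sum>j<b i. s j ^ m))"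
  using assms
  by (simp add: sum.Sigma_lessThan_times power_mult_distrib sum_distrib_left sum_distrib_right mult_ac)

lemma p_integral_inverse_reflect_product:
  assumes "prime p" "0 < r" "r < p"
  shows "p_integral p (inverse (of_nat (r * (p - r))))"
proof -
  have "\<not> p dvd r" "\<not> p dvd p - r" using assms(2,3) by (auto dest: dvd_imp_le)
  then have "\<not> int p dvd int (r * (p - r))" using assms(1) by (simp add: prime_dvd_mult_iff)
  then show ?thesis
    using p_integral_fraction[of p "int (r * (p - r))" 1] by (simp add: inverse_eq_divide)
qed

lemma p_integral_prod_fact_power_int:
  assumes "prime p" "\<And>i. i < k \<Longrightarrow> b i < p"
  shows "p_integral p (\<Prod>i<k. (fact (b i) :: rat) powi c i)"
proof -
  have "p_unit p (fact (b i))" if "i < k" for i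
    using p_unit_of_nat[OF assms(1), of "fact (b i)"] assms(2)[OF that] prime_dvd_fact_iff[OF assms(1)]
    by (simp add: of_nat_fact)
  then show ?thesis
    using assms(1) by (intro p_unit_imp_p_integral p_unit_prod p_unit_power_int) auto
qed

lemma padic_cong_prod_fact_mult_prime:
  fixes k n p :: nat and b :: "nat \<Rightarrow> nat" and c :: "nat \<Rightarrow> int"
  assumes n: "n > 0" and odd_moments: "\<forall>j<n. (\<Sum>i<k. c i * int (b i) ^ (2 * j + 1)) = 0"
    and p: "prime p" "2 * n + 1 < p" and b: "\<And>i. i < k \<Longrightarrow> b i < p"
  shows "padic_cong p (2 * n + 1)
           (\<Prod>i<k. (fact (b i * p) :: rat) powi c i) (\<Prod>i<k. (fact (b i) :: rat) powi c i)"
proof -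
  define A where "A = {1..(p - 1) div 2}"
  define F where "F = (SIGMA i:{..<k}. {..<b i} \<times> A)"
  define w where "w r = inverse (of_nat (r * (p - r)) :: rat)" for r
  define s where "s j = (of_nat (j * (j + 1)) :: rat)" for j
  define a where "a = (\<lambda>(i :: nat, j, r). s j * w r)"
  define e where "e = (\<lambda>(i, j :: nat, r :: nat). c i)"
  define Q where "Q = (\<Prod>t\<in>F. (1 + a t * of_nat p ^ 2) powi e t)"
  have "odd p" using prime_odd_nat[OF p(1)] p(2) n by simp
  moreover have "(\<Sum>i<k. int (b i) * c i) = 0" using odd_moments n by (auto simp: mult.commute)
  ultimately have fact_split:
    "(\<Prod>i<k. (fact (b i * p) :: rat) powi c i) = (\<Prod>i<k. (fact (b i) :: rat) powi c i) * Q"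
    unfolding Q_def F_def A_def a_def e_def s_def w_def
    by (subst prod_fact_mult_odd_powi) (simp_all add: split_def)
  have moments: "(\<Sum>t\<in>F. of_int (e t) * a t ^ m)
      = (\<Sum>r\<in>A. w r ^ m) * (\<Sum>i<k. of_int (c i) * (\<Sum>j<b i. s j ^ m))" for m
    using sum_Sigma_product_powers[where A = A and c = c and b = b and s = s and w = w]
    by (simp add: F_def a_def e_def A_def split_def)
  have "padic_cong p (2 * n + 1) Q 1" unfolding Q_def
  proof (rule padic_cong_prod_one_plus_powi[OF p(1)])
    show "finite F" unfolding F_def A_def by (auto intro: finite_cartesian_product)
    show "\<not> p dvd n" using n p(2) by (auto dest: dvd_imp_le)
    show "p_integral p (a t)" if "t \<in> F" for t
    proof -
      obtain i j r where t: "t = (i, j, r)" "r \<in> A" using \<open>t \<in> F\<close> by (auto simp: F_def)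
      then have "p_integral p (w r)"
        unfolding w_def using p by (intro p_integral_inverse_reflect_product) (auto simp: A_def)
      then show ?thesis unfolding t(1) a_def s_def
        using p(1) by (simp only: case_prod_conv p_integral_mult p_integral_of_nat)
    qed
    show "(\<Sum>t\<in>F. of_int (e t) * a t ^ m) = 0" if "0 < m" "m < n" for m
      using weighted_sum_pronic_powers_eq_0[OF odd_moments \<open>m < n\<close>] by (simp add: moments s_def)
    have "p_integral p (\<Sum>i<k. of_int (c i) * (\<Sum>j<b i. s j ^ n))"
      using p(1) unfolding s_def
      by (intro p_integral_sum p_integral_mult p_integral_of_int p_integral_power p_integral_of_nat)
    with padic_cong_sum_reflect_product_inverse_power[OF p(1) n p(2)]
    show "padic_cong p 1 (\<Sum>t\<in>F. of_int (e t) * a t ^ n) 0"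
      unfolding moments A_def w_def by (rule padic_cong_0_mult_p_integral[OF p(1)])
  qed (simp_all add: n)
  from padic_cong_mult_p_integral[OF p(1) this p_integral_prod_fact_power_int[OF p(1) b]]
  show ?thesis unfolding fact_split by simp
qed

theorem mainTheorem13:
  fixes k n :: nat and b :: "nat \<Rightarrow> nat" and c :: "nat \<Rightarrow> int"
  assumes "n > 0"
    and "\<forall>j<n. (\<Sum>i<k. c i * int (b i) ^ (2 * j + 1)) = 0"
  shows "\<exists>P. \<forall>p. prime p \<and> p > P \<longrightarrow>
           padic_cong p (2 * n + 1)
             (\<Prod>i<k. (fact (b i * p) :: rat) powi c i)
             (\<Prod>i<k. (fact (b i) :: rat) powi c i)"
proof (intro exI allI impI)
  fix p assume p: "prime p \<and> p > 2 * n + 1 + (\<Sum>i<k. b i)"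
  have "b i < p" if "i < k" for i
    using p member_le_sum[of i "{..<k}" b] that by simp
  then show "padic_cong p (2 * n + 1)
      (\<Prod>i<k. (fact (b i * p) :: rat) powi c i) (\<Prod>i<k. (fact (b i) :: rat) powi c i)"
    using p by (intro padic_cong_prod_fact_mult_prime[OF assms]) auto
qed

end
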